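(* Fix a number $x$ (real or complex) and let $(u_n)_{n\ge0}$ satisfy $(n+\tfrac12)u_{n+1}=2xn\,u_n-(n-\tfrac12)u_{n-1}$ for all $n\ge1$. (a) If $\hat u_n=\dfrac{x u_n-u_{n-1}}{2n+1}$ for $n\ge1$, then $(n+\tfrac32)\hat u_{n+1}=2xn\,\hat u_n-(n-\tfrac32)\hat u_{n-1}$ for all $n\ge2$. (b) The same conclusion holds for $\hat u_n=\dfrac{x u_n-u_{n+1}}{2n-1}$, $n\ge0$. *)

theory Defs
  imports "HOL-Analysis.Analysis"
begin

end

theory Submission
  imports Defs
begin

text \<open>Both transforms send solutions of \<open>(n + a) u\<^sub>n\<^sub>+\<^sub>1 = 2 x n u\<^sub>n - (n - a) u\<^sub>n\<^sub>-\<^sub>1\<close>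
  to solutions of the same recurrence with parameter \<open>a + 1\<close>; for \<open>a = 1/2\<close> the factor \<open>1/2\<close>
  relating \<open>2n + 1\<close> to \<open>n + a\<close> is harmless because the recurrence is linear.
  For \<open>v\<^sub>n = x u\<^sub>n - u\<^sub>n\<^sub>-\<^sub>1\<close> the recurrence at \<open>n - 1\<close> rewrites \<open>(n - 1 - a) v\<^sub>n\<^sub>-\<^sub>1\<close> as
  \<open>(n - 1 + a) (u\<^sub>n - x u\<^sub>n\<^sub>-\<^sub>1)\<close>, and with this the new recurrence for \<open>v\<^sub>n / (n + a)\<close>,
  cleared of denominators, becomes a linear combination of the old one at \<open>n - 1\<close> and \<open>n\<close>.
  The forward difference \<open>x u\<^sub>n - u\<^sub>n\<^sub>+\<^sub>1\<close>, divided by \<open>n - a\<close>, is handled symmetrically.\<close>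

definition three_term_recurrence :: "'a::field \<Rightarrow> 'a \<Rightarrow> (nat \<Rightarrow> 'a) \<Rightarrow> nat \<Rightarrow> bool" where
  "three_term_recurrence a x u n \<longleftrightarrow>
     (of_nat n + a) * u (n+1) = 2 * x * of_nat n * u n - (of_nat n - a) * u (n-1)"

lemma three_term_recurrence_scale:
  assumes "three_term_recurrence a x u n"
  shows "three_term_recurrence a x (\<lambda>m. c * u m) n"
  using arg_cong[OF assms[unfolded three_term_recurrence_def], of "(*) c"]
  unfolding three_term_recurrence_def by (simp add: algebra_simps)

lemma three_term_recurrence_backward_difference:
  fixes a x :: "'a::field"
  assumes rec0: "three_term_recurrence a x u n" and rec1: "three_term_recurrence a x u (Suc n)"
    and a: "- a \<notin> \<nat>"
  shows "three_term_recurrence (a + 1) x (\<lambda>m. (x * u m - u (m - 1)) / (of_nat m + a)) (Suc n)"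
proof -
  define v where "v m = x * u m - u (m - 1)" for m
  have nz: "of_nat m + a \<noteq> 0" for m
    using a by (metis add.commute add_eq_0_iff of_nat_in_Nats)
  define A B where "A = of_nat n + 1 + a" and "B = of_nat n + a"
  have AB: "A \<noteq> 0" "B \<noteq> 0"
    using nz[of n] nz[of "n+1"] by (simp_all add: A_def B_def add_ac)
  have "A * B * v (n+2) = 2 * x * (of_nat n + 1) * B * v (n+1) - A * (of_nat n - a) * v n"
    using rec0 rec1 unfolding three_term_recurrence_def v_def A_def B_def
    by (simp add: algebra_simps) algebra
  also have "\<dots> = A * B * (2 * x * (of_nat n + 1) * (v (n+1) / A) - (of_nat n - a) * (v n / B))"
    using AB by (simp add: field_simps)
  finally have "v (n+2) = 2 * x * (of_nat n + 1) * (v (n+1) / (of_nat n + 1 + a))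
      - (of_nat n - a) * (v n / (of_nat n + a))"
    using AB by (simp add: A_def B_def)
  moreover have "(of_nat (Suc n) + (a + 1)) * (v (Suc n + 1) / (of_nat (Suc n + 1) + a)) = v (n+2)"
    using nz[of "n+2"] by (simp add: add_ac)
  ultimately show ?thesis
    unfolding three_term_recurrence_def v_def[symmetric] by (simp add: algebra_simps)
qed

lemma three_term_recurrence_forward_difference:
  fixes a x :: "'a::field"
  assumes rec1: "three_term_recurrence a x u (Suc n)" and rec2: "three_term_recurrence a x u (Suc (Suc n))"
    and a: "a \<notin> \<nat>"
  shows "three_term_recurrence (a + 1) x (\<lambda>m. (x * u m - u (m + 1)) / (of_nat m - a)) (Suc n)"
proof -
  define w where "w m = x * u m - u (m + 1)" for m
  have nz: "of_nat m - a \<noteq> 0" for m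
    using a by (metis eq_iff_diff_eq_0 of_nat_in_Nats)
  define A B where "A = of_nat n + 2 - a" and "B = of_nat n + 1 - a"
  have AB: "A \<noteq> 0" "B \<noteq> 0"
    using nz[of "n+2"] nz[of "n+1"] by (simp_all add: A_def B_def add_ac)
  have "A * B * ((of_nat n + 2 + a) * (w (n+2) / A)) = (of_nat n + 2 + a) * B * w (n+2)"
    using AB by simp
  also have "\<dots> = 2 * x * (of_nat n + 1) * A * w (n+1) - A * B * w n"
    using rec1 rec2 unfolding three_term_recurrence_def w_def A_def B_def
    by (simp add: algebra_simps) algebra
  also have "\<dots> = A * B * (2 * x * (of_nat n + 1) * (w (n+1) / B) - w n)"
    using AB by (simp add: field_simps)
  finally have "(of_nat n + 2 + a) * (w (n+2) / (of_nat n + 2 - a))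
      = 2 * x * (of_nat n + 1) * (w (n+1) / (of_nat n + 1 - a)) - w n"
    using AB by (simp add: A_def B_def)
  moreover have "(of_nat n - a) * (w n / (of_nat n - a)) = w n"
    using nz[of n] by simp
  ultimately show ?thesis
    unfolding three_term_recurrence_def w_def[symmetric] by (simp add: algebra_simps)
qed

lemma one_half_notin_Nats:
  shows "(1/2 :: 'a::field_char_0) \<notin> \<nat>" and "- (1/2 :: 'a) \<notin> \<nat>"
proof
  assume "(1/2 :: 'a) \<in> \<nat>"
  then obtain m where "of_nat m = (1/2 :: 'a)" by (auto elim: Nats_cases)
  then have "of_nat (2 * m) = (1 :: 'a)" by (simp only: of_nat_mult of_nat_numeral) simp
  then show False by (metis of_nat_eq_1_iff odd_one dvd_triv_left)
next
  show "- (1/2 :: 'a) \<notin> \<nat>"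
  proof
    assume "- (1/2 :: 'a) \<in> \<nat>"
    then obtain m where "of_nat m = - (1/2 :: 'a)" by (auto elim: Nats_cases)
    then have "of_nat (2 * m + 1) = (0 :: 'a)" by simp
    then show False by (simp only: of_nat_eq_0_iff)
  qed
qed

theorem mainTheorem3:
  fixes x :: "'a :: field_char_0" and u :: "nat \<Rightarrow> 'a"
  assumes rec: "\<And>n. n \<ge> 1 \<Longrightarrow>
      (of_nat n + 1/2) * u (n+1) = 2 * x * of_nat n * u n - (of_nat n - 1/2) * u (n-1)"
  shows "(\<forall>n\<ge>2. let uh = (\<lambda>m. (x * u m - u (m-1)) / (2 * of_nat m + 1)) in
            (of_nat n + 3/2) * uh (n+1) = 2 * x * of_nat n * uh n - (of_nat n - 3/2) * uh (n-1))
       \<and> (\<forall>n\<ge>2. let uh = (\<lambda>m. (x * u m - u (m+1)) / (2 * of_nat m - 1)) in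
            (of_nat n + 3/2) * uh (n+1) = 2 * x * of_nat n * uh n - (of_nat n - 3/2) * uh (n-1))"
proof -
  have rec': "three_term_recurrence (1/2) x u m" if "m \<ge> 1" for m
    using rec[OF that] by (simp add: three_term_recurrence_def)
  have halves: "(1/2 :: 'a) + 1 = 3/2"
    "c / (2 * of_nat m + 1) = 1/2 * (c / (of_nat m + 1/2))"
    "c / (2 * of_nat m - 1) = 1/2 * (c / (of_nat m - 1/2))" for c :: 'a and m :: nat
    by (simp_all add: field_simps)
  have "three_term_recurrence (3/2) x (\<lambda>m. (x * u m - u (m-1)) / (2 * of_nat m + 1)) (Suc k)
      \<and> three_term_recurrence (3/2) x (\<lambda>m. (x * u m - u (m+1)) / (2 * of_nat m - 1)) (Suc k)"
    if "k \<ge> 1" for k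
    using three_term_recurrence_scale[OF three_term_recurrence_backward_difference
        [OF rec' rec' one_half_notin_Nats(2)], of k "1/2"]
      three_term_recurrence_scale[OF three_term_recurrence_forward_difference
        [OF rec' rec' one_half_notin_Nats(1)], of k "1/2"] that
    by (simp only: halves)
  from this[of "n - 1" for n] show ?thesis
    by (simp add: Let_def three_term_recurrence_def)
qed

end
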